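(* Let $(S,\mathcal C)$ be a connectoid and $N\subseteq S$ a countably infinite connected set. Then $N$ is a necklace if and only if for every finite set $Y\subseteq N$ there is an element of $\mathcal K(N\setminus Y)$ containing almost all elements of $N$. Furthermore, if $N$ is a necklace, then the $X$-tail of $N$ is a necklace for every finite set $X\subseteq S$.
   Context: A connectoid is given by a set $S$ and a set $\mathcal F$ of finite subsets of $S$ such that (i) $F\cup F'\in\mathcal F$ whenever $F,F'\in\mathcal F$ and $F\cap F'\neq\emptyset$, and (ii) $\emptyset\in\mathcal F$ and $\{s\}\in\mathcal F$ for every $s\in S$. A set $C\subseteq S$ is connected if for all $x,y\in C$ there is $F\in\mathcal F$ with $F\subseteq C$ and $x,y\in F$; $\mathcal C$ is the set of connected sets. For $S'\subseteq S$, a component of $S'$ is a maximal connected subset of $S'$, and $\mathcal K(S')$ is the set of components of $S'$. "Almost all" means all but finitely many. A necklace is a connected set $N$ for which there is a family $(H_n)_{n\in\mathbb N}$ of finite connected sets with $N=\bigcup_n H_n$ and $H_i\cap H_j\neq\emptyset$ iff $|i-j|\le 1$. For a necklace $N$ and finite $X\subseteq S$, the $X$-tail of $N$ is the unique element of $\mathcal K(N\setminus X)$ containing almost all elements of $N$. *)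

theory Defs
  imports Main "HOL-Library.Countable_Set"
begin

definition connectoid :: "'a set \<Rightarrow> 'a set set \<Rightarrow> bool" where
  "connectoid S \<F> \<longleftrightarrow>
     (\<forall>F\<in>\<F>. finite F \<and> F \<subseteq> S) \<and>
     (\<forall>F\<in>\<F>. \<forall>F'\<in>\<F>. F \<inter> F' \<noteq> {} \<longrightarrow> F \<union> F' \<in> \<F>) \<and>
     {} \<in> \<F> \<and> (\<forall>s\<in>S. {s} \<in> \<F>)"

definition conn :: "'a set set \<Rightarrow> 'a set \<Rightarrow> bool" where
  "conn \<F> C \<longleftrightarrow> (\<forall>x\<in>C. \<forall>y\<in>C. \<exists>F\<in>\<F>. F \<subseteq> C \<and> x \<in> F \<and> y \<in> F)"

definition components :: "'a set set \<Rightarrow> 'a set \<Rightarrow> 'a set set" where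
  "components \<F> S' = {K. K \<subseteq> S' \<and> conn \<F> K \<and>
      (\<forall>K'. K \<subseteq> K' \<and> K' \<subseteq> S' \<and> conn \<F> K' \<longrightarrow> K' = K)}"

definition almost_all_in :: "'a set \<Rightarrow> 'a set \<Rightarrow> bool" where
  "almost_all_in N K \<longleftrightarrow> finite (N - K)"

definition necklace :: "'a set set \<Rightarrow> 'a set \<Rightarrow> bool" where
  "necklace \<F> N \<longleftrightarrow> conn \<F> N \<and>
     (\<exists>H :: nat \<Rightarrow> 'a set. N = (\<Union>n. H n) \<and>
        (\<forall>n. finite (H n) \<and> conn \<F> (H n)) \<and>
        (\<forall>i j. H i \<inter> H j \<noteq> {} \<longleftrightarrow> (i \<le> j + 1 \<and> j \<le> i + 1)))"

definition tail :: "'a set set \<Rightarrow> 'a set \<Rightarrow> 'a set \<Rightarrow> 'a set" where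
  "tail \<F> N X = (THE K. K \<in> components \<F> (N - X) \<and> almost_all_in N K)"

end

theory Submission
  imports Defs
begin

text \<open>
  Removing a finite set \<open>Y\<close> from a necklace with beads \<open>H 0, H 1, \<dots>\<close> only touches finitely
  many beads; the beads beyond them form a connected set containing almost all of \<open>N\<close>, hence lie
  in one component of \<open>N - Y\<close>.

  Conversely, call a finite \<open>Z \<subseteq> N\<close> a cut if \<open>N - Z\<close> is connected; by hypothesis every finite
  subset of \<open>N\<close> lies in a cut (the complement of the cofinite component). Enumerating \<open>N\<close> as
  \<open>v 0, v 1, \<dots>\<close>, build cuts \<open>{} = C 0 \<subseteq> C 1 \<subseteq> \<dots>\<close> and finite connected beads
  \<open>H n \<subseteq> N - C n\<close> containing \<open>C (n+1) - C n\<close> and a point outside \<open>C (n+1)\<close>, with \<open>C (n+2)\<close>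
  a cut containing \<open>C (n+1) \<union> H n \<union> {v (n+1)}\<close>. The point of \<open>H n\<close> outside \<open>C (n+1)\<close>
  lies in \<open>H (n+1)\<close>, while for \<open>j \<ge> n+2\<close> the bead \<open>H j\<close> avoids \<open>C j \<supseteq> H n\<close>.

  The \<open>X\<close>-tail \<open>K\<close> inherits the criterion: for finite \<open>Y\<close>, the cofinite component of
  \<open>N - (X \<union> Y)\<close> meets \<open>K\<close>, so it lies in \<open>K\<close> and is a cofinite component of \<open>K - Y\<close>.
\<close>

lemma conn_of_mem: "F \<in> \<F> \<Longrightarrow> conn \<F> F"
  unfolding conn_def by blast

lemma connD: "conn \<F> C \<Longrightarrow> x \<in> C \<Longrightarrow> y \<in> C \<Longrightarrow> \<exists>F\<in>\<F>. F \<subseteq> C \<and> x \<in> F \<and> y \<in> F"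
  unfolding conn_def by blast

lemma connectoid_Un: "connectoid S \<F> \<Longrightarrow> F \<in> \<F> \<Longrightarrow> F' \<in> \<F> \<Longrightarrow> F \<inter> F' \<noteq> {} \<Longrightarrow> F \<union> F' \<in> \<F>"
  unfolding connectoid_def by blast

lemma connectoid_finite: "connectoid S \<F> \<Longrightarrow> F \<in> \<F> \<Longrightarrow> finite F"
  unfolding connectoid_def by blast

lemma conn_Un:
  assumes c: "connectoid S \<F>" and A: "conn \<F> A" and B: "conn \<F> B" and AB: "A \<inter> B \<noteq> {}"
  shows "conn \<F> (A \<union> B)"
proof -
  obtain t where t: "t \<in> A" "t \<in> B" using AB by blast
  have reach_t: "\<exists>F\<in>\<F>. F \<subseteq> A \<union> B \<and> x \<in> F \<and> t \<in> F" if x: "x \<in> A \<union> B" for x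
  proof -
    obtain C where "conn \<F> C" "C \<subseteq> A \<union> B" "x \<in> C" "t \<in> C"
      using x A B t by (metis Un_iff sup_ge1 sup_ge2)
    from connD[OF this(1,3,4)] obtain F where "F \<in> \<F>" "F \<subseteq> C" "x \<in> F" "t \<in> F" by blast
    with \<open>C \<subseteq> A \<union> B\<close> show ?thesis by blast
  qed
  show ?thesis
    unfolding conn_def
  proof (intro ballI)
    fix x y assume "x \<in> A \<union> B" "y \<in> A \<union> B"
    obtain Fx where Fx: "Fx \<in> \<F>" "Fx \<subseteq> A \<union> B" "x \<in> Fx" "t \<in> Fx"
      using reach_t[OF \<open>x \<in> A \<union> B\<close>] by blast
    obtain Fy where Fy: "Fy \<in> \<F>" "Fy \<subseteq> A \<union> B" "y \<in> Fy" "t \<in> Fy"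
      using reach_t[OF \<open>y \<in> A \<union> B\<close>] by blast
    have "Fx \<inter> Fy \<noteq> {}" using Fx(4) Fy(4) by blast
    then have "Fx \<union> Fy \<in> \<F>" by (rule connectoid_Un[OF c Fx(1) Fy(1)])
    moreover have "Fx \<union> Fy \<subseteq> A \<union> B" using Fx(2) Fy(2) by (rule Un_least)
    ultimately show "\<exists>F\<in>\<F>. F \<subseteq> A \<union> B \<and> x \<in> F \<and> y \<in> F"
      using Fx(3) Fy(3) by blast
  qed
qed

lemma conn_UN_mono:
  fixes A :: "nat \<Rightarrow> 'a set"
  assumes "mono A" and "\<And>n. conn \<F> (A n)"
  shows "conn \<F> (\<Union>n. A n)"
  unfolding conn_def
proof (intro ballI)
  fix x y assume "x \<in> (\<Union>n. A n)" "y \<in> (\<Union>n. A n)"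
  then obtain i j where "x \<in> A i" "y \<in> A j" by blast
  moreover have "A i \<subseteq> A (max i j)" "A j \<subseteq> A (max i j)"
    using monoD[OF \<open>mono A\<close>, of i "max i j"] monoD[OF \<open>mono A\<close>, of j "max i j"] by simp_all
  ultimately have "x \<in> A (max i j)" "y \<in> A (max i j)" by blast+
  from connD[OF assms(2) this] obtain F where "F \<in> \<F>" "F \<subseteq> A (max i j)" "x \<in> F" "y \<in> F"
    by blast
  then show "\<exists>F\<in>\<F>. F \<subseteq> (\<Union>n. A n) \<and> x \<in> F \<and> y \<in> F" by blast
qed

lemma conn_finite_superset:
  assumes c: "connectoid S \<F>" and C: "conn \<F> C" and P: "finite P" "P \<noteq> {}" "P \<subseteq> C"
  shows "\<exists>H. finite H \<and> conn \<F> H \<and> P \<subseteq> H \<and> H \<subseteq> C"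
  using P
proof (induction P rule: finite_ne_induct)
  case (singleton x)
  then have "x \<in> C" by simp
  from connD[OF C this this] obtain F where F: "F \<in> \<F>" "F \<subseteq> C" "x \<in> F" by blast
  have "finite F" "conn \<F> F" using connectoid_finite[OF c F(1)] conn_of_mem[OF F(1)] .
  with F show ?case by blast
next
  case (insert x P)
  then obtain H where H: "finite H" "conn \<F> H" "P \<subseteq> H" "H \<subseteq> C" by blast
  obtain y where "y \<in> P" using insert(2) by blast
  have "x \<in> C" "y \<in> C" using insert(5) \<open>y \<in> P\<close> by auto
  from connD[OF C this] obtain F where F: "F \<in> \<F>" "F \<subseteq> C" "x \<in> F" "y \<in> F" by blast
  have "H \<inter> F \<noteq> {}" using \<open>y \<in> P\<close> H(3) F(4) by blast
  then have "conn \<F> (H \<union> F)" by (rule conn_Un[OF c H(2) conn_of_mem[OF F(1)]])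
  moreover have "finite (H \<union> F)" using H(1) connectoid_finite[OF c F(1)] by simp
  moreover have "insert x P \<subseteq> H \<union> F" "H \<union> F \<subseteq> C" using H(3,4) F(2,3) by auto
  ultimately show ?case by blast
qed

lemma componentsD:
  assumes "K \<in> components \<F> M"
  shows "K \<subseteq> M" "conn \<F> K" "\<And>K'. K \<subseteq> K' \<Longrightarrow> K' \<subseteq> M \<Longrightarrow> conn \<F> K' \<Longrightarrow> K' = K"
  using assms unfolding components_def by blast+

lemma conn_subset_component:
  assumes c: "connectoid S \<F>" and K: "K \<in> components \<F> M"
    and C: "conn \<F> C" "C \<subseteq> M" "K \<inter> C \<noteq> {}"
  shows "C \<subseteq> K"
proof -
  have "conn \<F> (K \<union> C)" by (rule conn_Un[OF c componentsD(2)[OF K] C(1,3)])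
  moreover have "K \<union> C \<subseteq> M" using componentsD(1)[OF K] C(2) by blast
  ultimately have "K \<union> C = K" by (intro componentsD(3)[OF K]) auto
  then show ?thesis by blast
qed

lemma components_eqI:
  assumes c: "connectoid S \<F>" and K: "K \<in> components \<F> M" "K' \<in> components \<F> M"
    and "K \<inter> K' \<noteq> {}"
  shows "K = K'"
proof -
  have "K' \<subseteq> K"
    using conn_subset_component[OF c K(1) componentsD(2,1)[OF K(2)]] assms(4) .
  moreover have "K \<subseteq> K'"
    using conn_subset_component[OF c K(2) componentsD(2,1)[OF K(1)]] assms(4) by blast
  ultimately show ?thesis by blast
qed

lemma exists_component_superset:
  assumes c: "connectoid S \<F>" and T: "conn \<F> T" "T \<subseteq> M" "T \<noteq> {}"
  shows "\<exists>K\<in>components \<F> M. T \<subseteq> K"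
proof -
  define K where "K = \<Union>{C. conn \<F> C \<and> T \<subseteq> C \<and> C \<subseteq> M}"
  have "conn \<F> K"
    unfolding conn_def
  proof (intro ballI)
    fix x y assume "x \<in> K" "y \<in> K"
    then obtain C1 C2 where C: "conn \<F> C1" "T \<subseteq> C1" "C1 \<subseteq> M" "x \<in> C1"
      "conn \<F> C2" "T \<subseteq> C2" "C2 \<subseteq> M" "y \<in> C2"
      unfolding K_def by blast
    have "C1 \<inter> C2 \<noteq> {}" using C(2,6) T(3) by blast
    then have "conn \<F> (C1 \<union> C2)" by (rule conn_Un[OF c C(1) C(5)])
    moreover from this have "C1 \<union> C2 \<subseteq> K" unfolding K_def using C(2,3,7) by blast
    moreover have "x \<in> C1 \<union> C2" "y \<in> C1 \<union> C2" using C(4,8) by blast+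
    ultimately show "\<exists>F\<in>\<F>. F \<subseteq> K \<and> x \<in> F \<and> y \<in> F" by (meson connD order_trans)
  qed
  moreover have "T \<subseteq> K" "K \<subseteq> M" using T unfolding K_def by blast+
  ultimately have "K \<in> components \<F> M" unfolding components_def K_def by blast
  with \<open>T \<subseteq> K\<close> show ?thesis by blast
qed

lemma components_restrict:
  assumes "K \<in> components \<F> M" "K \<subseteq> L" "L \<subseteq> M"
  shows "K \<in> components \<F> L"
proof -
  have "K' = K" if "K \<subseteq> K'" "K' \<subseteq> L" "conn \<F> K'" for K'
    using componentsD(3)[OF assms(1) that(1) _ that(3)] that(2) assms(3) by blast
  with assms(2) componentsD(2)[OF assms(1)] show ?thesis unfolding components_def by blast
qed

lemma almost_all_in_Int_nonempty:
  assumes "infinite N" "almost_all_in N K" "almost_all_in N K'"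
  shows "K \<inter> K' \<noteq> {}"
proof
  assume "K \<inter> K' = {}"
  then have "N \<subseteq> (N - K) \<union> (N - K')" by blast
  with assms show False unfolding almost_all_in_def by (meson finite_UnI finite_subset)
qed

lemma conn_UN_chain:
  fixes H :: "nat \<Rightarrow> 'a set"
  assumes c: "connectoid S \<F>" and H: "\<And>n. conn \<F> (H n)" "\<And>n. H n \<inter> H (Suc n) \<noteq> {}"
  shows "conn \<F> (\<Union>n. H n)"
proof -
  have conn_prefix: "conn \<F> (\<Union>n\<le>k. H n)" for k
  proof (induction k)
    case (Suc k)
    have "(\<Union>n\<le>k. H n) \<inter> H (Suc k) \<noteq> {}" using H(2)[of k] by blast
    from conn_Un[OF c Suc.IH H(1) this] show ?case by (simp add: atMost_Suc Un_commute)
  qed (simp add: H(1))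
  have "mono (\<lambda>k. \<Union>n\<le>k. H n)" by (intro monoI UN_mono) auto
  from conn_UN_mono[OF this conn_prefix] have "conn \<F> (\<Union>k. \<Union>n\<le>k. H n)" .
  moreover have "(\<Union>k. \<Union>n\<le>k. H n) = (\<Union>n. H n)" by blast
  ultimately show ?thesis by simp
qed

lemma necklaceE:
  assumes "necklace \<F> N"
  obtains H :: "nat \<Rightarrow> 'a set" where "N = (\<Union>n. H n)" "\<And>n. finite (H n)" "\<And>n. conn \<F> (H n)"
    "\<And>n. H n \<noteq> {}" "\<And>n. H n \<inter> H (Suc n) \<noteq> {}" "\<And>i j. i + 2 \<le> j \<Longrightarrow> H i \<inter> H j = {}"
proof -
  from assms obtain H :: "nat \<Rightarrow> 'a set" where H1: "N = (\<Union>n. H n)" and H2: "\<forall>n. finite (H n) \<and> conn \<F> (H n)"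
    and H3: "\<forall>i j. H i \<inter> H j \<noteq> {} \<longleftrightarrow> (i \<le> j + 1 \<and> j \<le> i + 1)"
    unfolding necklace_def by (elim conjE exE)
  show thesis
  proof (rule that[of H])
    show "N = (\<Union>n. H n)" by (rule H1)
    show "finite (H n)" "conn \<F> (H n)" for n using H2 by simp_all
    show "H n \<noteq> {}" for n using H3[rule_format, of n n] by simp
    show "H n \<inter> H (Suc n) \<noteq> {}" for n using H3[rule_format, of n "Suc n"] by simp
    show "H i \<inter> H j = {}" if "i + 2 \<le> j" for i j using H3[rule_format, of i j] that by simp
  qed
qed

lemma necklace_cofinite_component:
  assumes c: "connectoid S \<F>" and "necklace \<F> N" "finite Y"
  shows "\<exists>K\<in>components \<F> (N - Y). almost_all_in N K"
proof -
  obtain H :: "nat \<Rightarrow> 'a set" where H: "N = (\<Union>n. H n)" "\<And>n. finite (H n)" "\<And>n. conn \<F> (H n)"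
    "\<And>n. H n \<noteq> {}" "\<And>n. H n \<inter> H (Suc n) \<noteq> {}" "\<And>i j. i + 2 \<le> j \<Longrightarrow> H i \<inter> H j = {}"
    using \<open>necklace \<F> N\<close> by (rule necklaceE) (rule that)
  have "\<forall>y\<in>Y \<inter> N. \<exists>n. y \<in> H n" using H(1) by blast
  from bchoice[OF this] obtain f where f: "\<forall>y\<in>Y \<inter> N. y \<in> H (f y)" ..
  define m where "m = Suc (Max (f ` (Y \<inter> N)))"
  have f_less: "f y < m" if "y \<in> Y \<inter> N" for y
    using that \<open>finite Y\<close> unfolding m_def by (simp add: le_imp_less_Suc)
  define T where "T = (\<Union>n. H (n + Suc m))"
  have "conn \<F> T" unfolding T_def by (rule conn_UN_chain[OF c]) (use H(3,5) in simp_all)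
  moreover have "T \<subseteq> N - Y"
  proof
    fix x assume "x \<in> T"
    then obtain n where x: "x \<in> H (n + Suc m)" unfolding T_def by blast
    then have "x \<in> N" using H(1) by blast
    moreover have "x \<notin> Y"
    proof
      assume "x \<in> Y"
      with \<open>x \<in> N\<close> have "x \<in> H (f x)" "f x < m" using f f_less by blast+
      then have "H (f x) \<inter> H (n + Suc m) \<noteq> {}" "f x + 2 \<le> n + Suc m" using x by auto
      with H(6) show False by blast
    qed
    ultimately show "x \<in> N - Y" by blast
  qed
  moreover have "T \<noteq> {}" using H(4)[of "0 + Suc m"] unfolding T_def by blast
  ultimately obtain K where K: "K \<in> components \<F> (N - Y)" "T \<subseteq> K"
    using exists_component_superset[OF c] by blast
  have "N - K \<subseteq> (\<Union>n\<le>m. H n)"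
  proof
    fix x assume "x \<in> N - K"
    then obtain n where "x \<in> H n" "x \<notin> T" using H(1) K(2) by blast
    moreover have "n \<le> m"
    proof (rule ccontr)
      assume "\<not> n \<le> m"
      then have "H n = H ((n - Suc m) + Suc m)" by simp
      with \<open>x \<in> H n\<close> \<open>x \<notin> T\<close> show False unfolding T_def by blast
    qed
    ultimately show "x \<in> (\<Union>n\<le>m. H n)" by blast
  qed
  then have "almost_all_in N K" unfolding almost_all_in_def by (rule finite_subset) (simp add: H(2))
  with K(1) show ?thesis by blast
qed

lemma necklace_of_chain:
  fixes C H :: "nat \<Rightarrow> 'a set"
  assumes "conn \<F> N" and C: "mono C" "C 0 = {}" "(\<Union>n. C n) = N"
    and H: "\<And>n. finite (H n)" "\<And>n. conn \<F> (H n)" "\<And>n. C (Suc n) - C n \<subseteq> H n"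
      "\<And>n. H n \<subseteq> C (Suc (Suc n)) - C n" "\<And>n. \<not> H n \<subseteq> C (Suc n)"
  shows "necklace \<F> N"
proof -
  have "N \<subseteq> (\<Union>n. H n)"
  proof
    fix x assume "x \<in> N"
    then have ex: "\<exists>n. x \<in> C n" using C(3) by blast
    define k where "k = (LEAST n. x \<in> C n)"
    have "x \<in> C k" unfolding k_def using ex by (rule LeastI_ex)
    moreover from this obtain j where "k = Suc j" using C(2) by (cases k) auto
    moreover have "x \<notin> C j" using not_less_Least[of j "\<lambda>n. x \<in> C n"] calculation unfolding k_def by simp
    ultimately show "x \<in> (\<Union>n. H n)" using H(3)[of j] by blast
  qed
  moreover have "(\<Union>n. H n) \<subseteq> N" using H(4) C(3) by blast
  ultimately have union: "N = (\<Union>n. H n)" by blast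
  have next_meets: "H i \<inter> H (Suc i) \<noteq> {}" for i
  proof -
    obtain p where "p \<in> H i" "p \<notin> C (Suc i)" using H(5) by blast
    then have "p \<in> H (Suc i)" using H(4)[of i] H(3)[of "Suc i"] by blast
    with \<open>p \<in> H i\<close> show ?thesis by blast
  qed
  have far_disjoint: "H i \<inter> H j = {}" if "i + 2 \<le> j" for i j
  proof -
    have "H i \<subseteq> C j" using H(4)[of i] monoD[OF C(1), of "Suc (Suc i)" j] that by auto
    with H(4)[of j] show ?thesis by blast
  qed
  have "H i \<inter> H j \<noteq> {} \<longleftrightarrow> (i \<le> j + 1 \<and> j \<le> i + 1)" for i j
  proof (cases "i \<le> j + 1 \<and> j \<le> i + 1")
    case True
    then consider "j = i" | "j = Suc i" | "i = Suc j" by linarith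
    then show ?thesis using True next_meets[of i] next_meets[of j] H(5)[of i] by cases blast+
  next
    case False
    then show ?thesis using far_disjoint[of i j] far_disjoint[of j i] by auto
  qed
  with \<open>conn \<F> N\<close> union H(1,2) show ?thesis unfolding necklace_def by blast
qed

definition conn_cut :: "'a set set \<Rightarrow> 'a set \<Rightarrow> 'a set \<Rightarrow> bool" where
  "conn_cut \<F> N Z \<longleftrightarrow> finite Z \<and> Z \<subseteq> N \<and> conn \<F> (N - Z)"

lemma cofinite_components_imp_conn_cut:
  assumes cofinite: "\<And>Y. finite Y \<Longrightarrow> Y \<subseteq> N \<Longrightarrow> \<exists>K\<in>components \<F> (N - Y). almost_all_in N K"
    and "finite Y" "Y \<subseteq> N"
  shows "\<exists>Z. Y \<subseteq> Z \<and> conn_cut \<F> N Z"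
proof -
  obtain K where K: "K \<in> components \<F> (N - Y)" "almost_all_in N K"
    using cofinite[OF assms(2,3)] by blast
  have "N - (N - K) = K" "Y \<subseteq> N - K" using componentsD(1)[OF K(1)] assms(3) by blast+
  with componentsD(2)[OF K(1)] K(2) show ?thesis
    unfolding almost_all_in_def conn_cut_def by (intro exI[of _ "N - K"]) auto
qed

lemma exists_conn_bead:
  assumes c: "connectoid S \<F>" and "infinite N" "conn_cut \<F> N B" "conn_cut \<F> N A"
  shows "\<exists>H. finite H \<and> conn \<F> H \<and> A - B \<subseteq> H \<and> H \<subseteq> N - B \<and> \<not> H \<subseteq> A"
proof -
  have B: "finite B" "conn \<F> (N - B)" and A: "finite A" "A \<subseteq> N"
    using assms(3,4) unfolding conn_cut_def by auto
  have "infinite (N - (A \<union> B))" using assms(2) A(1) B(1) by (simp add: Diff_infinite_finite)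
  then obtain p where p: "p \<in> N" "p \<notin> A" "p \<notin> B" by (metis Diff_iff Un_iff finite.emptyI ex_in_conv)
  have "finite (insert p (A - B))" "insert p (A - B) \<subseteq> N - B" using p A by auto
  from conn_finite_superset[OF c B(2) this(1) _ this(2)]
  obtain H where "finite H" "conn \<F> H" "insert p (A - B) \<subseteq> H" "H \<subseteq> N - B" by blast
  with p show ?thesis by blast
qed

fun cut_chain :: "('a set \<Rightarrow> 'a set) \<Rightarrow> ('a set \<Rightarrow> 'a set \<Rightarrow> 'a set) \<Rightarrow> (nat \<Rightarrow> 'a) \<Rightarrow> nat \<Rightarrow> 'a set"
  where
    "cut_chain clo bead v 0 = {}"
  | "cut_chain clo bead v (Suc 0) = clo {v 0}"
  | "cut_chain clo bead v (Suc (Suc n)) = clo (cut_chain clo bead v (Suc n)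
      \<union> bead (cut_chain clo bead v n) (cut_chain clo bead v (Suc n)) \<union> {v (Suc n)})"

context
  fixes \<F> :: "'a set set" and N :: "'a set"
    and clo :: "'a set \<Rightarrow> 'a set" and bead :: "'a set \<Rightarrow> 'a set \<Rightarrow> 'a set" and v :: "nat \<Rightarrow> 'a"
  assumes clo: "\<And>Y. finite Y \<Longrightarrow> Y \<subseteq> N \<Longrightarrow> Y \<subseteq> clo Y \<and> conn_cut \<F> N (clo Y)"
    and bead: "\<And>A B. conn_cut \<F> N B \<Longrightarrow> conn_cut \<F> N A \<Longrightarrow> finite (bead B A) \<and> conn \<F> (bead B A)
      \<and> A - B \<subseteq> bead B A \<and> bead B A \<subseteq> N - B \<and> \<not> bead B A \<subseteq> A"
    and v: "range v = N" and conn_N: "conn \<F> N"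
begin

lemma cut_chain_Suc_Suc_superset:
  assumes "conn_cut \<F> N (cut_chain clo bead v n)" "conn_cut \<F> N (cut_chain clo bead v (Suc n))"
  shows "cut_chain clo bead v (Suc n) \<union> bead (cut_chain clo bead v n) (cut_chain clo bead v (Suc n))
      \<union> {v (Suc n)} \<subseteq> cut_chain clo bead v (Suc (Suc n))
    \<and> conn_cut \<F> N (cut_chain clo bead v (Suc (Suc n)))"
proof -
  let ?U = "cut_chain clo bead v (Suc n) \<union> bead (cut_chain clo bead v n) (cut_chain clo bead v (Suc n))
      \<union> {v (Suc n)}"
  have "finite ?U" "?U \<subseteq> N"
    using assms bead[OF assms] v unfolding conn_cut_def by auto
  from clo[OF this] show ?thesis by simp
qed

lemma conn_cut_cut_chain: "conn_cut \<F> N (cut_chain clo bead v n)"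
proof -
  have "conn_cut \<F> N (cut_chain clo bead v n) \<and> conn_cut \<F> N (cut_chain clo bead v (Suc n))"
  proof (induction n)
    case 0
    show ?case using conn_N clo[of "{v 0}"] v unfolding conn_cut_def by auto
  next
    case (Suc n)
    then show ?case using cut_chain_Suc_Suc_superset by blast
  qed
  then show ?thesis ..
qed

lemma cut_chain_necklace: "necklace \<F> N"
proof -
  define C where "C = cut_chain clo bead v"
  define H where "H n = bead (C n) (C (Suc n))" for n
  have H: "finite (H n)" "conn \<F> (H n)" "C (Suc n) - C n \<subseteq> H n" "H n \<subseteq> N - C n"
    "\<not> H n \<subseteq> C (Suc n)" for n
    using bead[OF conn_cut_cut_chain conn_cut_cut_chain] unfolding H_def C_def by blast+
  have C_SS: "C (Suc n) \<union> H n \<union> {v (Suc n)} \<subseteq> C (Suc (Suc n))" for n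
    using cut_chain_Suc_Suc_superset[OF conn_cut_cut_chain conn_cut_cut_chain]
    unfolding H_def C_def by blast
  have C_Suc: "C n \<subseteq> C (Suc n) \<and> v n \<in> C (Suc n)" for n
  proof (cases n)
    case 0
    show ?thesis using clo[of "{v 0}"] v unfolding 0 C_def by auto
  next
    case (Suc k)
    show ?thesis using C_SS[of k] unfolding Suc by auto
  qed
  have mono: "mono C" using C_Suc by (simp add: mono_iff_le_Suc)
  have C0: "C 0 = {}" unfolding C_def by simp
  have union: "(\<Union>n. C n) = N"
  proof
    show "(\<Union>n. C n) \<subseteq> N" using conn_cut_cut_chain unfolding C_def conn_cut_def by blast
    show "N \<subseteq> (\<Union>n. C n)" using C_Suc v by blast
  qed
  have H_sub: "H n \<subseteq> C (Suc (Suc n)) - C n" for n using C_SS[of n] H(4)[of n] by blast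
  show ?thesis by (rule necklace_of_chain[of \<F> N C H, OF conn_N mono C0 union H(1-3) H_sub H(5)])
qed

end

lemma cofinite_components_imp_necklace:
  assumes c: "connectoid S \<F>" and N: "countable N" "infinite N" "conn \<F> N"
    and cofinite: "\<And>Y. finite Y \<Longrightarrow> Y \<subseteq> N \<Longrightarrow> \<exists>K\<in>components \<F> (N - Y). almost_all_in N K"
  shows "necklace \<F> N"
proof (rule cut_chain_necklace)
  define clo where "clo Y = (SOME Z. Y \<subseteq> Z \<and> conn_cut \<F> N Z)" for Y
  define bead where
    "bead B A = (SOME H. finite H \<and> conn \<F> H \<and> A - B \<subseteq> H \<and> H \<subseteq> N - B \<and> \<not> H \<subseteq> A)" for B A
  show "Y \<subseteq> clo Y \<and> conn_cut \<F> N (clo Y)" if "finite Y" "Y \<subseteq> N" for Y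
    unfolding clo_def by (rule someI_ex) (rule cofinite_components_imp_conn_cut[OF cofinite that])
  show "finite (bead B A) \<and> conn \<F> (bead B A) \<and> A - B \<subseteq> bead B A \<and> bead B A \<subseteq> N - B
      \<and> \<not> bead B A \<subseteq> A" if "conn_cut \<F> N B" "conn_cut \<F> N A" for A B
    unfolding bead_def by (rule someI_ex) (rule exists_conn_bead[OF c N(2) that])
  show "range (from_nat_into N) = N" using N(1,2) by (simp add: range_from_nat_into infinite_imp_nonempty)
qed (rule N(3))

lemma tail_eqI:
  assumes c: "connectoid S \<F>" and "infinite N"
    and K: "K \<in> components \<F> (N - X)" "almost_all_in N K"
  shows "tail \<F> N X = K"
  unfolding tail_def
proof (rule the_equality)
  show "K \<in> components \<F> (N - X) \<and> almost_all_in N K" using K ..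
next
  fix K' assume K': "K' \<in> components \<F> (N - X) \<and> almost_all_in N K'"
  have "K' \<inter> K \<noteq> {}" using almost_all_in_Int_nonempty[OF \<open>infinite N\<close>] K'[THEN conjunct2] K(2) .
  with K'[THEN conjunct1] show "K' = K" by (rule components_eqI[OF c _ K(1)])
qed

lemma cofinite_components_of_component:
  assumes c: "connectoid S \<F>" and "infinite N"
    and cofinite: "\<And>Y. finite Y \<Longrightarrow> \<exists>K\<in>components \<F> (N - Y). almost_all_in N K"
    and K: "K \<in> components \<F> (N - X)" "almost_all_in N K" and "finite X" "finite Y"
  shows "\<exists>K'\<in>components \<F> (K - Y). almost_all_in K K'"
proof -
  obtain K' where K': "K' \<in> components \<F> (N - (X \<union> Y))" "almost_all_in N K'"
    using cofinite \<open>finite X\<close> \<open>finite Y\<close> by blast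
  note K'_sub = componentsD(1)[OF K'(1)]
  have "K \<inter> K' \<noteq> {}" using almost_all_in_Int_nonempty[OF \<open>infinite N\<close> K(2) K'(2)] .
  moreover have "K' \<subseteq> N - X" using K'_sub by blast
  ultimately have "K' \<subseteq> K" using conn_subset_component[OF c K(1) componentsD(2)[OF K'(1)]] by blast
  then have "K' \<subseteq> K - Y" using K'_sub by blast
  moreover have "K - Y \<subseteq> N - (X \<union> Y)" using componentsD(1)[OF K(1)] by blast
  ultimately have "K' \<in> components \<F> (K - Y)" by (rule components_restrict[OF K'(1)])
  moreover have "K - K' \<subseteq> N - K'" using componentsD(1)[OF K(1)] by blast
  then have "almost_all_in K K'" using K'(2) unfolding almost_all_in_def by (rule finite_subset)
  ultimately show ?thesis by blast
qed

lemma necklace_tail: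
  assumes c: "connectoid S \<F>" and N: "countable N" "infinite N"
    and "necklace \<F> N" "finite X"
  shows "necklace \<F> (tail \<F> N X)"
proof -
  note cofinite = necklace_cofinite_component[OF c \<open>necklace \<F> N\<close>]
  obtain K where K: "K \<in> components \<F> (N - X)" "almost_all_in N K"
    using cofinite \<open>finite X\<close> by blast
  have "countable K" using componentsD(1)[OF K(1)] N(1) by (blast intro: countable_subset)
  have "infinite (N - (N - K))" using N(2) K(2) unfolding almost_all_in_def
    by (rule Diff_infinite_finite[rotated])
  then have "infinite K" by (rule infinite_super[rotated]) blast
  have "necklace \<F> K"
  proof (rule cofinite_components_imp_necklace[OF c \<open>countable K\<close> \<open>infinite K\<close>])
    show "conn \<F> K" by (rule componentsD(2)[OF K(1)])
    show "\<exists>K'\<in>components \<F> (K - Y). almost_all_in K K'" if "finite Y" for Y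
      by (rule cofinite_components_of_component[OF c N(2) cofinite K \<open>finite X\<close> that])
  qed
  then show ?thesis by (simp only: tail_eqI[OF c N(2) K])
qed

theorem corollary2p3:
  fixes S :: "'a set" and \<F> :: "'a set set" and N :: "'a set"
  assumes "connectoid S \<F>"
    and "N \<subseteq> S" and "countable N" and "infinite N" and "conn \<F> N"
  shows "(necklace \<F> N \<longleftrightarrow>
           (\<forall>Y. finite Y \<and> Y \<subseteq> N \<longrightarrow>
              (\<exists>K\<in>components \<F> (N - Y). almost_all_in N K)))
      \<and> (necklace \<F> N \<longrightarrow>
           (\<forall>X. finite X \<and> X \<subseteq> S \<longrightarrow> necklace \<F> (tail \<F> N X)))"
proof (intro conjI iffI)
  assume "necklace \<F> N"
  then show "\<forall>Y. finite Y \<and> Y \<subseteq> N \<longrightarrow> (\<exists>K\<in>components \<F> (N - Y). almost_all_in N K)"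
    using necklace_cofinite_component[OF assms(1)] by blast
next
  assume "\<forall>Y. finite Y \<and> Y \<subseteq> N \<longrightarrow> (\<exists>K\<in>components \<F> (N - Y). almost_all_in N K)"
  then show "necklace \<F> N" by (intro cofinite_components_imp_necklace[OF assms(1,3,4,5)]) blast
next
  show "necklace \<F> N \<longrightarrow> (\<forall>X. finite X \<and> X \<subseteq> S \<longrightarrow> necklace \<F> (tail \<F> N X))"
    using necklace_tail[OF assms(1,3,4)] by blast
qed

end
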